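(* Let $k$ be an algebraically closed field of characteristic $0$, $d\ge3$, $n\ge2$, and let $V_n$ have basis $v_1,\dots,v_n$ with symmetric $d$-linear form $\Theta_d(v_{i_1},\dots,v_{i_d})=1$ if $i_1+\dots+i_d=(d-1)n+1$ and $0$ otherwise. Let $\mathrm{Cent}_k(n,d)=\{f\in\mathrm{End}_k(V_n):\Theta_d(fu_1,u_2,\dots,u_d)=\Theta_d(u_1,fu_2,\dots,u_d)\ \forall u_i\}$ and $\mathcal{L}(n,d)=\{L\in\mathfrak{gl}(V_n):\sum_{i=1}^d\Theta_d(u_1,\dots,L(u_i),\dots,u_d)=0\ \forall u_j\}$. Then $\dim_k\mathcal{L}(n,d)<\dim_k\mathrm{Cent}_k(n,d)=n$. *)

theory Defs
  imports "HOL-Computational_Algebra.Polynomial" "HOL-Library.FuncSet" "HOL-Library.Function_Algebras"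
begin

definition alg_closed :: "'a::field itself \<Rightarrow> bool" where
  "alg_closed _ \<longleftrightarrow> (\<forall>p::'a poly. degree p > 0 \<longrightarrow> (\<exists>x. poly p x = 0))"

text \<open>Vectors of V_n: functions nat => k, coordinates w.r.t. v_1..v_n are the values at 1..n.
  A d-tuple (u_1,...,u_d) is a family U with U j = u_j for j in 1..d.\<close>
definition Theta :: "nat \<Rightarrow> nat \<Rightarrow> (nat \<Rightarrow> nat \<Rightarrow> 'a::field) \<Rightarrow> 'a" where
  "Theta n d U = (\<Sum>ix \<in> Pi\<^sub>E {1..d} (\<lambda>_. {1..n}).
      (if (\<Sum>j=1..d. ix j) = (d - 1) * n + 1 then (\<Prod>j=1..d. U j (ix j)) else 0))"

text \<open>Endomorphisms of V_n as n x n matrices (entries indexed by 1..n, zero elsewhere).\<close>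
definition mats :: "nat \<Rightarrow> (nat \<Rightarrow> nat \<Rightarrow> 'a::field) set" where
  "mats n = {f. \<forall>i j. (i \<notin> {1..n} \<or> j \<notin> {1..n}) \<longrightarrow> f i j = 0}"

definition mat_app :: "nat \<Rightarrow> (nat \<Rightarrow> nat \<Rightarrow> 'a::field) \<Rightarrow> (nat \<Rightarrow> 'a) \<Rightarrow> (nat \<Rightarrow> 'a)" where
  "mat_app n f u = (\<lambda>i. \<Sum>j=1..n. f i j * u j)"

definition mscale :: "'a::field \<Rightarrow> (nat \<Rightarrow> nat \<Rightarrow> 'a) \<Rightarrow> (nat \<Rightarrow> nat \<Rightarrow> 'a)" where
  "mscale c f = (\<lambda>i j. c * f i j)"

definition Cent :: "nat \<Rightarrow> nat \<Rightarrow> (nat \<Rightarrow> nat \<Rightarrow> 'a::field) set" where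
  "Cent n d = {f \<in> mats n. \<forall>U. Theta n d (U(1 := mat_app n f (U 1))) = Theta n d (U(2 := mat_app n f (U 2)))}"

definition Lie :: "nat \<Rightarrow> nat \<Rightarrow> (nat \<Rightarrow> nat \<Rightarrow> 'a::field) set" where
  "Lie n d = {L \<in> mats n. \<forall>U. (\<Sum>i=1..d. Theta n d (U(i := mat_app n L (U i)))) = 0}"

end

theory Submission
  imports Defs
begin

(* Evaluating Theta on basis vectors turns both defining conditions into linear relations
   between matrix entries: with N = (d - 1) n + 1, Theta(e_a1, ..., f e_ai, ..., e_ad) is the entry
   of f in row N + a_i - (a_1 + ... + a_d) and column a_i.
   For the centroid these relations force f to be an upper triangular Toeplitz matrix, i.e. a
   linear combination of the powers T^0, ..., T^(n-1) of the nilpotent shift T; conversely T^k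
   is in the centroid because applying it in any slot merely raises the index sum seen by
   Theta from N to N + k.
   For a derivation L, the tuple (n, ..., n) gives d L(1,n) = 0, and the tuples
   (x, y, z, n, ..., n) give relations which determine L from the entries L(r,n), 2 <= r <= n,
   of its last column; so L \<mapsto> (L(r,n))_r is injective and dim Lie <= n - 1. *)

type_synonym 'a matrix = "nat \<Rightarrow> nat \<Rightarrow> 'a"

lemma (in vector_space_pair) dim_image_eq_inj_on_span:
  assumes f: "Vector_Spaces.linear s1 s2 f" and inj: "inj_on f (vs1.span S)"
  shows "vs2.dim (f ` S) = vs1.dim S"
proof -
  obtain B where B: "B \<subseteq> S" "vs1.independent B" "S \<subseteq> vs1.span B" "card B = vs1.dim S"
    using vs1.basis_exists by blast
  have inj_B: "inj_on f (vs1.span B)"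
    using inj B(1) by (rule inj_on_subset[OF _ vs1.span_mono])
  have "vs2.independent (f ` B)"
    using linear_independent_injective_image[OF f B(2) inj_B] .
  moreover have "f ` S \<subseteq> vs2.span (f ` B)"
    using B(3) linear_span_image[OF f, of B] by blast
  ultimately have "card (f ` B) = vs2.dim (f ` S)"
    using B(1) by (intro vs2.basis_card_eq_dim) auto
  moreover have "card (f ` B) = card B"
    using inj_B by (rule card_image[OF inj_on_subset[OF _ vs1.span_superset]])
  ultimately show ?thesis using B(4) by simp
qed

lemma vector_space_mscale: "vector_space (mscale :: 'a::field \<Rightarrow> 'a matrix \<Rightarrow> _)"
  by unfold_locales (auto simp: mscale_def fun_eq_iff algebra_simps)

interpretation mat: vector_space "mscale :: 'a::field \<Rightarrow> 'a matrix \<Rightarrow> _"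
  by (rule vector_space_mscale)

interpretation mat_pair: vector_space_pair
  "mscale :: 'a::field \<Rightarrow> 'a matrix \<Rightarrow> _" "mscale :: 'a \<Rightarrow> 'a matrix \<Rightarrow> _"
  by unfold_locales

lemma sum_mat_apply: "(sum F K) i j = (\<Sum>k\<in>K. F k i j)"
  for F :: "'k \<Rightarrow> 'b::comm_monoid_add matrix"
  by (induction K rule: infinite_finite_induct) auto

definition unit_vec :: "'a::field matrix" where
  "unit_vec t = (\<lambda>m. if m = t then 1 else 0)"

lemma mat_app_unit_vec: "t \<in> {1..n} \<Longrightarrow> mat_app n f (unit_vec t) = (\<lambda>i. f i t)"
  by (simp add: mat_app_def unit_vec_def if_distrib[of "\<lambda>x. _ * x"] sum.delta cong: if_cong)

lemma sum_const_upd3: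
  assumes "d \<ge> 3"
  shows "(\<Sum>k=1..d. ((\<lambda>_. w)(1 := x, 2 := y, 3 := z)) k) = x + y + z + (d - 3) * (w::nat)"
proof -
  have "{1..d} = {1, 2, 3} \<union> {4..d}" using assms by auto
  then show ?thesis by (simp add: sum.union_disjoint)
qed

lemma Theta_unit_vecs_upd:
  fixes v :: "nat \<Rightarrow> 'a::field"
  assumes i: "i \<in> {1..d}" and a: "a \<in> {1..d} \<rightarrow> {1..n}" and v: "\<forall>m>n. v m = 0"
  shows "Theta n d ((\<lambda>k. unit_vec (a k))(i := v)) = v ((d - 1) * n + 1 + a i - (\<Sum>k=1..d. a k))"
proof -
  define N where "N = (d - 1) * n + 1"
  define R where "R = (\<Sum>k\<in>{1..d}-{i}. a k)"
  define t where "t = N - R"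
  define P where "P = Pi\<^sub>E {1..d} (\<lambda>_. {1..n})"
  define ix0 where "ix0 = restrict (a(i := t)) {1..d}"
  have "R \<le> (d - 1) * n"
    unfolding R_def using a i sum_bounded_above[of "{1..d}-{i}" a n] by (auto simp: Pi_def)
  then have R: "R < N" by (simp add: N_def)
  have sum_a: "(\<Sum>k=1..d. a k) = a i + R"
    unfolding R_def using i by (simp add: sum.remove)
  have summand:
    "(if (\<Sum>j=1..d. ix j) = N then (\<Prod>j=1..d. ((\<lambda>k. unit_vec (a k))(i := v)) j (ix j)) else 0)
      = (if ix = ix0 then v t else 0)" if ix: "ix \<in> P" for ix
  proof (cases "\<forall>j\<in>{1..d}-{i}. ix j = a j")
    case True
    have "(\<Sum>j=1..d. ix j) = ix i + R"
      unfolding R_def using i True by (simp add: sum.remove)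
    moreover have "ix = ix0 \<longleftrightarrow> ix i = t"
      using True ix i by (auto simp: ix0_def P_def fun_eq_iff PiE_def extensional_def)
    ultimately show ?thesis
      using True i R by (auto simp: prod.remove unit_vec_def t_def)
  next
    case False
    then obtain j where "j \<in> {1..d}-{i}" "ix j \<noteq> a j" by blast
    moreover from this have "ix \<noteq> ix0" by (auto simp: ix0_def)
    ultimately show ?thesis
      using i by (auto simp: prod.remove unit_vec_def intro!: prod_zero)
  qed
  have "Theta n d ((\<lambda>k. unit_vec (a k))(i := v)) = (\<Sum>ix\<in>P. if ix = ix0 then v t else 0)"
    unfolding Theta_def P_def[symmetric] N_def[symmetric] by (rule sum.cong[OF refl summand])
  also have "\<dots> = (if ix0 \<in> P then v t else 0)"
    by (simp add: P_def finite_PiE)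
  also have "\<dots> = v t"
    using a R v by (auto simp: ix0_def P_def t_def Pi_def)
  finally show ?thesis using sum_a R by (simp add: N_def t_def)
qed

lemma Theta_mat_app_unit_vecs_upd:
  fixes f :: "'a::field matrix"
  assumes f: "f \<in> mats n" and i: "i \<in> {1..d}" and a: "a \<in> {1..d} \<rightarrow> {1..n}"
  shows "Theta n d ((\<lambda>k. unit_vec (a k))(i := mat_app n f (unit_vec (a i))))
       = f ((d - 1) * n + 1 + a i - (\<Sum>k=1..d. a k)) (a i)"
proof -
  have "\<forall>m>n. f m t = 0" for t
    using f by (auto simp: mats_def)
  moreover have "a i \<in> {1..n}"
    using a i by auto
  ultimately show ?thesis
    by (simp add: mat_app_unit_vec Theta_unit_vecs_upd[OF i a] del: fun_upd_apply)
qed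

definition shift_mat :: "nat \<Rightarrow> nat \<Rightarrow> 'a::field matrix" where
  "shift_mat n k = (\<lambda>i j. if i \<in> {1..n} \<and> j \<in> {1..n} \<and> j = i + k then 1 else 0)"

lemma mat_app_shift_mat:
  "mat_app n (shift_mat n k) u = (\<lambda>i. if i \<in> {1..n} \<and> i + k \<le> n then u (i + k) else 0)"
  by (auto simp: mat_app_def shift_mat_def fun_eq_iff if_distrib[of "\<lambda>x. x * _"] sum.delta
      cong: if_cong)

lemma prod_upd_slot:
  fixes i d :: nat
  assumes "i \<in> {1..d}"
  shows "(\<Prod>j=1..d. (U(i := w)) j (ix j)) = w (ix i) * (\<Prod>j\<in>{1..d}-{i}. U j (ix j))"
proof -
  have "(\<Prod>j=1..d. (U(i := w)) j (ix j))
      = (U(i := w)) i (ix i) * (\<Prod>j\<in>{1..d}-{i}. (U(i := w)) j (ix j))"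
    using assms by (intro prod.remove) auto
  also have "(\<Prod>j\<in>{1..d}-{i}. (U(i := w)) j (ix j)) = (\<Prod>j\<in>{1..d}-{i}. U j (ix j))"
    by (rule prod.cong) auto
  finally show ?thesis by simp
qed

lemma bij_betw_raise_slot:
  fixes i d :: nat
  assumes i: "i \<in> {1..d}"
  shows "bij_betw (\<lambda>ix. ix(i := ix i + k))
    {ix \<in> Pi\<^sub>E {1..d} (\<lambda>_. {1..n}). (\<Sum>j=1..d. ix j) = (d - 1) * n + 1 \<and> ix i + k \<le> n}
    {ix \<in> Pi\<^sub>E {1..d} (\<lambda>_. {1..n}). (\<Sum>j=1..d. ix j) = (d - 1) * n + 1 + k}"
    (is "bij_betw ?raise ?S ?T")
proof (rule bij_betw_byWitness[where f' = "\<lambda>ix. ix(i := ix i - k)"])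
  have sum_upd: "(\<Sum>j=1..d. (ix(i := m)) j) = m + (\<Sum>j\<in>{1..d}-{i}. ix j)" for ix m
    using i by (simp add: sum.remove)
  have upd_in_PiE: "ix(i := m) \<in> Pi\<^sub>E {1..d} (\<lambda>_. {1..n}) \<longleftrightarrow> m \<in> {1..n}"
    if "ix \<in> Pi\<^sub>E {1..d} (\<lambda>_. {1..n})" for ix m
    using that i by (auto simp: PiE_def Pi_def extensional_def)
  have slot_gt: "ix i > k" if ix: "ix \<in> ?T" for ix
  proof -
    have "(\<Sum>j\<in>{1..d}-{i}. ix j) \<le> (d - 1) * n"
      using ix i sum_bounded_above[of "{1..d}-{i}" ix n] by (auto simp: PiE_def Pi_def)
    then show ?thesis
      using ix sum_upd[of ix "ix i"] by simp
  qed
  show "?raise ` ?S \<subseteq> ?T"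
  proof (rule image_subsetI)
    fix ix assume ix: "ix \<in> ?S"
    then have "ix i \<in> {1..n}"
      using i by auto
    then show "ix(i := ix i + k) \<in> ?T"
      using ix sum_upd[of ix "ix i"] sum_upd[of ix "ix i + k"] upd_in_PiE[of ix "ix i + k"] by auto
  qed
  show "(\<lambda>ix. ix(i := ix i - k)) ` ?T \<subseteq> ?S"
  proof (rule image_subsetI)
    fix ix assume ix: "ix \<in> ?T"
    then have "ix i > k" "ix i \<in> {1..n}"
      using slot_gt i by auto
    then show "ix(i := ix i - k) \<in> ?S"
      using ix sum_upd[of ix "ix i"] sum_upd[of ix "ix i - k"] upd_in_PiE[of ix "ix i - k"] by auto
  qed
  show "\<forall>ix\<in>?T. (ix(i := ix i - k))(i := (ix(i := ix i - k)) i + k) = ix"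
  proof
    fix ix assume "ix \<in> ?T"
    then show "(ix(i := ix i - k))(i := (ix(i := ix i - k)) i + k) = ix"
      using slot_gt[of ix] by (simp add: fun_eq_iff)
  qed
qed simp

lemma Theta_shift_mat_upd:
  fixes U :: "'a::field matrix"
  assumes i: "i \<in> {1..d}"
  shows "Theta n d (U(i := mat_app n (shift_mat n k) (U i))) =
    (\<Sum>ix\<in>Pi\<^sub>E {1..d} (\<lambda>_. {1..n}).
      if (\<Sum>j=1..d. ix j) = (d - 1) * n + 1 + k then (\<Prod>j=1..d. U j (ix j)) else 0)"
proof -
  define N where "N = (d - 1) * n + 1"
  define P where "P = Pi\<^sub>E {1..d} (\<lambda>_. {1..n})"
  define R where "R ix = (\<Prod>j\<in>{1..d}-{i}. U j (ix j))" for ix :: "nat \<Rightarrow> nat"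
  have fin: "finite P"
    by (simp add: P_def finite_PiE)
  have prod_split: "(\<Prod>j=1..d. U j (ix j)) = U i (ix i) * R ix" for ix
    using prod_upd_slot[OF i, of U "U i" ix] by (simp add: R_def)
  have R_upd: "R (ix(i := m)) = R ix" for ix m
    unfolding R_def by (rule prod.cong) auto
  have "Theta n d (U(i := mat_app n (shift_mat n k) (U i)))
      = (\<Sum>ix\<in>P. if (\<Sum>j=1..d. ix j) = N then mat_app n (shift_mat n k) (U i) (ix i) * R ix else 0)"
    unfolding Theta_def P_def[symmetric] N_def[symmetric] prod_upd_slot[OF i] R_def ..
  also have "\<dots> = (\<Sum>ix\<in>P.
      if (\<Sum>j=1..d. ix j) = N \<and> ix i + k \<le> n then U i (ix i + k) * R ix else 0)"
    using i by (intro sum.cong) (auto simp: mat_app_shift_mat P_def)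
  also have "\<dots> = (\<Sum>ix\<in>{ix\<in>P. (\<Sum>j=1..d. ix j) = N \<and> ix i + k \<le> n}.
      U i (ix i + k) * R ix)"
    by (simp add: sum.inter_filter[OF fin])
  also have "\<dots> = (\<Sum>ix\<in>{ix\<in>P. (\<Sum>j=1..d. ix j) = N \<and> ix i + k \<le> n}.
      U i ((ix(i := ix i + k)) i) * R (ix(i := ix i + k)))"
    by (simp add: R_upd)
  also have "\<dots> = (\<Sum>ix\<in>{ix\<in>P. (\<Sum>j=1..d. ix j) = N + k}. U i (ix i) * R ix)"
    by (rule sum.reindex_bij_betw[OF bij_betw_raise_slot[OF i, of k n, folded P_def N_def]])
  also have "\<dots> = (\<Sum>ix\<in>P. if (\<Sum>j=1..d. ix j) = N + k then (\<Prod>j=1..d. U j (ix j)) else 0)"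
    unfolding prod_split by (simp add: sum.inter_filter[OF fin])
  finally show ?thesis
    by (simp add: P_def N_def)
qed

lemma shift_mat_in_Cent:
  assumes "d \<ge> 2"
  shows "shift_mat n k \<in> Cent n d"
proof -
  have "Theta n d (U(1 := mat_app n (shift_mat n k) (U 1)))
      = Theta n d (U(2 := mat_app n (shift_mat n k) (U 2)))" for U :: "'a matrix"
    using assms by (simp add: Theta_shift_mat_upd)
  then show ?thesis by (auto simp: Cent_def mats_def shift_mat_def)
qed

lemma Cent_entries_eq:
  fixes f :: "'a::field matrix"
  assumes f: "f \<in> Cent n d" and d: "d \<ge> 2" and a: "a \<in> {1..d} \<rightarrow> {1..n}"
  shows "f ((d - 1) * n + 1 + a 1 - (\<Sum>k=1..d. a k)) (a 1)
       = f ((d - 1) * n + 1 + a 2 - (\<Sum>k=1..d. a k)) (a 2)"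
proof -
  have "f \<in> mats n"
    and "Theta n d ((\<lambda>k. unit_vec (a k))(1 := mat_app n f (unit_vec (a 1))))
       = Theta n d ((\<lambda>k. unit_vec (a k))(2 := mat_app n f (unit_vec (a 2))))"
    using f unfolding Cent_def by (auto dest: spec[where x = "\<lambda>k. unit_vec (a k)"])
  then show ?thesis
    using d by (simp add: Theta_mat_app_unit_vecs_upd[OF _ _ a] del: fun_upd_apply)
qed

lemma Cent_toeplitz:
  fixes f :: "'a::field matrix"
  assumes f: "f \<in> Cent n d" and d: "d \<ge> 3" and r: "r \<in> {1..n}" and j: "j \<in> {1..n}"
  shows "f r j = f (n + r - j) n"
proof -
  obtain m where m: "d = m + 3" using d by (metis add.commute le_iff_add)
  define a :: "nat \<Rightarrow> nat" where "a = (\<lambda>_. n)(1 := j, 2 := n, 3 := n + 1 - r)"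
  have a: "a \<in> {1..d} \<rightarrow> {1..n}" using r j by (auto simp: a_def)
  have "(\<Sum>k=1..d. a k) = (d - 1) * n + 1 + j - r"
    unfolding a_def sum_const_upd3[OF d] using r by (simp add: m algebra_simps)
  then show ?thesis
    using Cent_entries_eq[OF f _ a] r j unfolding m by (simp add: a_def algebra_simps)
qed

lemma Cent_eq_sum_shift_mat:
  fixes f :: "'a::field matrix"
  assumes f: "f \<in> Cent n d" and d: "d \<ge> 3"
  shows "f = (\<Sum>k<n. mscale (f (n - k) n) (shift_mat n k))"
proof (intro ext)
  fix i j :: nat
  have zero: "f i j = 0" if "i \<notin> {1..n} \<or> j \<notin> {1..n}" for i j
    using f that by (simp add: Cent_def mats_def)
  have shift_iff: "j = i + k \<longleftrightarrow> k = j - i" if "i \<le> j" for k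
    using that by auto
  have "(\<Sum>k<n. mscale (f (n - k) n) (shift_mat n k)) i j
      = (if i \<in> {1..n} \<and> j \<in> {1..n} \<and> i \<le> j then f (n - (j - i)) n else 0)"
    by (auto simp: sum_mat_apply mscale_def shift_mat_def if_distrib[of "\<lambda>x. _ * x"] shift_iff
        cong: if_cong)
  also have "\<dots> = f i j"
    using Cent_toeplitz[OF f d, of i j] zero[of "n + i - j" n] zero[of i j]
    by (cases "i \<in> {1..n} \<and> j \<in> {1..n}") force+
  finally show "f i j = (\<Sum>k<n. mscale (f (n - k) n) (shift_mat n k)) i j" ..
qed

lemma inj_on_shift_mat: "inj_on (shift_mat n :: nat \<Rightarrow> 'a::field matrix) {..<n}"
proof
  fix k l assume "k \<in> {..<n}" "l \<in> {..<n}" "(shift_mat n k :: 'a matrix) = shift_mat n l"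
  then have "(shift_mat n k :: 'a matrix) 1 (1 + k) = shift_mat n l 1 (1 + k)" by simp
  with \<open>k \<in> {..<n}\<close> show "k = l" by (auto simp: shift_mat_def split: if_splits)
qed

lemma independent_shift_mats: "mat.independent (shift_mat n ` {..<n} :: 'a::field matrix set)"
proof (rule mat.independent_if_scalars_zero)
  fix c :: "'a matrix \<Rightarrow> 'a" and x :: "'a matrix"
  assume sum: "(\<Sum>x\<in>shift_mat n ` {..<n}. mscale (c x) x) = 0" and "x \<in> shift_mat n ` {..<n}"
  then obtain k where k: "k < n" "x = shift_mat n k" by auto
  have "0 = (\<Sum>x\<in>shift_mat n ` {..<n}. mscale (c x) x) 1 (1 + k)" using sum by simp
  also have "\<dots> = (\<Sum>l<n. c (shift_mat n l) * shift_mat n l 1 (1 + k))"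
    by (simp add: sum_mat_apply mscale_def sum.reindex[OF inj_on_shift_mat])
  also have "\<dots> = c x"
    using k by (simp add: shift_mat_def if_distrib[of "\<lambda>x. _ * x"] sum.delta cong: if_cong)
  finally show "c x = 0" ..
qed simp

lemma dim_Cent:
  assumes "d \<ge> 3"
  shows "mat.dim (Cent n d :: 'a::field matrix set) = n"
proof -
  let ?B = "shift_mat n ` {..<n} :: 'a matrix set"
  have sub: "?B \<subseteq> Cent n d"
    using assms by (auto intro: shift_mat_in_Cent)
  have span: "Cent n d \<subseteq> mat.span ?B"
  proof
    fix f :: "'a matrix" assume "f \<in> Cent n d"
    then have "f = (\<Sum>k<n. mscale (f (n - k) n) (shift_mat n k))"
      using assms by (rule Cent_eq_sum_shift_mat)
    also have "\<dots> \<in> mat.span ?B"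
      by (intro mat.span_sum mat.span_scale mat.span_base) auto
    finally show "f \<in> mat.span ?B" .
  qed
  have "card ?B = mat.dim (Cent n d :: 'a matrix set)"
    using mat.basis_card_eq_dim[OF sub span independent_shift_mats] .
  then show ?thesis
    by (simp add: card_image[OF inj_on_shift_mat])
qed

(* The derivation identity tested on basis vectors only; unlike Lie n d, this is visibly a
   subspace. *)
definition Lie_on_basis :: "nat \<Rightarrow> nat \<Rightarrow> 'a::field matrix set" where
  "Lie_on_basis n d = {L \<in> mats n. \<forall>a \<in> {1..d} \<rightarrow> {1..n}.
      (\<Sum>i=1..d. L ((d - 1) * n + 1 + a i - (\<Sum>k=1..d. a k)) (a i)) = 0}"

lemma Lie_subset_Lie_on_basis: "Lie n d \<subseteq> Lie_on_basis n d"
proof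
  fix L :: "'a matrix" assume L: "L \<in> Lie n d"
  then have L_mat: "L \<in> mats n"
    by (simp add: Lie_def)
  have "(\<Sum>i=1..d. L ((d - 1) * n + 1 + a i - (\<Sum>k=1..d. a k)) (a i)) = 0"
    if a: "a \<in> {1..d} \<rightarrow> {1..n}" for a
  proof -
    have "(\<Sum>i=1..d. Theta n d ((\<lambda>k. unit_vec (a k))(i := mat_app n L (unit_vec (a i))))) = 0"
      using L unfolding Lie_def by (auto dest: spec[where x = "\<lambda>k. unit_vec (a k)"])
    then show ?thesis
      by (simp add: Theta_mat_app_unit_vecs_upd[OF L_mat _ a] del: fun_upd_apply)
  qed
  then show "L \<in> Lie_on_basis n d"
    using L_mat by (simp add: Lie_on_basis_def)
qed

lemma subspace_Lie_on_basis: "mat.subspace (Lie_on_basis n d :: 'a::field matrix set)"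
  by (auto simp: mat.subspace_def Lie_on_basis_def mats_def mscale_def sum.distrib
      sum_distrib_left[symmetric])

locale Lie_kernel =
  fixes n d :: nat and L :: "'a::field_char_0 matrix"
  assumes L: "L \<in> Lie_on_basis n d" and d: "d \<ge> 3" and n: "n \<ge> 2"
    and lower_last_column_zero: "\<forall>r\<in>{2..n}. L r n = 0"
begin

lemma outside: "i \<notin> {1..n} \<or> j \<notin> {1..n} \<Longrightarrow> L i j = 0"
  using L by (simp add: Lie_on_basis_def mats_def)

lemma rel:
  "a \<in> {1..d} \<rightarrow> {1..n} \<Longrightarrow>
    (\<Sum>i=1..d. L ((d - 1) * n + 1 + a i - (\<Sum>k=1..d. a k)) (a i)) = 0"
  using L by (simp add: Lie_on_basis_def)

lemma last_column_zero: "L r n = 0"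
proof -
  obtain m where m: "d = m + 3" using d by (metis add.commute le_iff_add)
  have "(\<Sum>i=1..d. L ((d - 1) * n + 1 + n - (\<Sum>k=1..d. n)) n) = 0"
    using rel[of "\<lambda>_. n"] n by simp
  moreover have "(d - 1) * n + 1 + n - (\<Sum>k=1..d. n) = 1"
    by (simp add: m algebra_simps)
  ultimately have "L 1 n = 0"
    using d by simp
  then show ?thesis
    using lower_last_column_zero outside[of r n] by (cases "r = 1") auto
qed

lemma triple:
  assumes "x \<in> {1..n}" "y \<in> {1..n}" "z \<in> {1..n}"
  shows "L (2 * n + 1 - y - z) x + L (2 * n + 1 - x - z) y + L (2 * n + 1 - x - y) z = 0"
proof -
  obtain m where m: "d = m + 3" using d by (metis add.commute le_iff_add)
  define a :: "nat \<Rightarrow> nat" where "a = (\<lambda>_. n)(1 := x, 2 := y, 3 := z)"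
  define F where "F i = L ((d - 1) * n + 1 + a i - (\<Sum>k=1..d. a k)) (a i)" for i
  have "a \<in> {1..d} \<rightarrow> {1..n}"
    using assms n by (auto simp: a_def)
  then have "(\<Sum>i=1..d. F i) = 0"
    unfolding F_def by (rule rel)
  moreover have "{1..d} = {1, 2, 3} \<union> {4..d}"
    using d by auto
  moreover have "(\<Sum>i=4..d. F i) = 0"
    by (simp add: F_def a_def last_column_zero)
  ultimately have "F 1 + F 2 + F 3 = 0"
    by (simp add: sum.union_disjoint add.assoc)
  moreover have "(\<Sum>k=1..d. a k) = x + y + z + (d - 3) * n"
    unfolding a_def by (rule sum_const_upd3[OF d])
  ultimately show ?thesis
    by (simp add: F_def a_def m algebra_simps mult_2_right)
qed

lemma pair:
  assumes "x \<in> {1..n}" "y \<in> {1..n}"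
  shows "L (n + 1 - y) x + L (n + 1 - x) y = 0"
  using triple[OF assms, of n] n by (simp add: last_column_zero)

lemma step:
  assumes c: "2 \<le> c" "c \<le> n" and r: "2 \<le> r" "r \<le> n + 1"
  shows "L (r - 1) (c - 1) = L r c + L (r + n - 1 - c) (n - 1)"
proof -
  have range: "c \<in> {1..n}" "n - 1 \<in> {1..n}" "n + 2 - r \<in> {1..n}" "c - 1 \<in> {1..n}"
    using c r n by auto
  have "L r c + L (r + n - 1 - c) (n - 1) + L (n + 2 - c) (n + 2 - r) = 0"
    using triple[OF range(1-3)] c r n by (simp add: algebra_simps)
  moreover have "L (n + 2 - c) (n + 2 - r) + L (r - 1) (c - 1) = 0"
    using pair[OF range(3,4)] c r by simp
  ultimately show ?thesis
    by (simp add: add_eq_0_iff)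
qed

lemma column:
  assumes "k \<le> n - 1" "1 \<le> r"
  shows "L r (n - k) = of_nat k * L (r + k - 1) (n - 1)"
  using assms
proof (induction k arbitrary: r)
  case 0
  then show ?case by (simp add: last_column_zero)
next
  case (Suc k)
  show ?case
  proof (cases "r \<le> n")
    case True
    have "L r (n - Suc k) = L (r + 1) (n - k) + L (r + k) (n - 1)"
      using step[of "n - k" "r + 1"] Suc.prems True by (simp add: Suc_diff_Suc)
    also have "L (r + 1) (n - k) = of_nat k * L (r + k) (n - 1)"
      using Suc.IH[of "r + 1"] Suc.prems by simp
    finally show ?thesis
      by (simp add: algebra_simps)
  next
    case False
    then show ?thesis
      using outside by simp
  qed
qed

lemma column_pred_zero: "L m (n - 1) = 0"
proof (cases "m \<in> {1..n}")
  case True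
  have range: "n - 1 \<in> {1..n}" "n + 1 - m \<in> {1..n}" "m - 1 \<le> n - 1"
    using True n by auto
  have "L m (n - 1) + L 2 (n + 1 - m) = 0"
    using pair[OF range(1,2)] True by simp
  moreover have "L 2 (n + 1 - m) = of_nat (m - 1) * L m (n - 1)"
    using column[OF range(3)] True by (simp add: Suc_diff_le)
  ultimately have "(1 + of_nat (m - 1)) * L m (n - 1) = 0"
    by (simp add: algebra_simps)
  then show ?thesis
    using True by (simp add: of_nat_diff)
qed (use outside in blast)

lemma eq_0: "L = 0"
proof (intro ext)
  fix r c
  show "L r c = 0 r c"
  proof (cases "r \<ge> 1 \<and> c \<in> {1..n}")
    case True
    then have "L r c = of_nat (n - c) * L (r + (n - c) - 1) (n - 1)"
      using column[of "n - c" r] by (simp add: diff_le_mono2)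
    then show ?thesis
      using column_pred_zero by simp
  qed (use outside in auto)
qed

end

definition lower_last_column :: "nat \<Rightarrow> 'a::field matrix \<Rightarrow> 'a matrix" where
  "lower_last_column n L = (\<lambda>i j. if i \<in> {2..n} \<and> j = n then L i j else 0)"

definition mat_unit :: "nat \<Rightarrow> nat \<Rightarrow> 'a::field matrix" where
  "mat_unit r c = (\<lambda>i j. if i = r \<and> j = c then 1 else 0)"

lemma linear_lower_last_column:
  "Vector_Spaces.linear (mscale :: 'a::field \<Rightarrow> _) mscale (lower_last_column n)"
  using vector_space_mscale
  by (auto simp: Vector_Spaces.linear_iff lower_last_column_def mscale_def fun_eq_iff)

lemma lower_last_column_in_span:
  "lower_last_column n L \<in> mat.span ((\<lambda>r. mat_unit r n) ` {2..n})"
proof -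
  have "lower_last_column n L = (\<Sum>r\<in>{2..n}. mscale (L r n) (mat_unit r n))"
    by (auto simp: lower_last_column_def mat_unit_def mscale_def sum_mat_apply fun_eq_iff
        if_distrib[of "\<lambda>x. _ * x"] sum.delta cong: if_cong)
  also have "\<dots> \<in> mat.span ((\<lambda>r. mat_unit r n) ` {2..n})"
    by (intro mat.span_sum mat.span_scale mat.span_base) auto
  finally show ?thesis .
qed

lemma inj_on_lower_last_column:
  assumes d: "d \<ge> 3" and n: "n \<ge> 2"
  shows "inj_on (lower_last_column n) (mat.span (Lie n d :: 'a::field_char_0 matrix set))"
proof -
  have "L = 0" if L: "L \<in> mat.span (Lie n d)" and zero: "lower_last_column n L = 0"
    for L :: "'a matrix"
  proof -
    have "L r n = 0" if "r \<in> {2..n}" for r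
      using that fun_cong[OF fun_cong[OF zero], of r n] by (simp add: lower_last_column_def)
    moreover have "L \<in> Lie_on_basis n d"
      using L mat.span_minimal[OF Lie_subset_Lie_on_basis subspace_Lie_on_basis] ..
    ultimately interpret Lie_kernel n d L
      using d n by unfold_locales auto
    show "L = 0" by (rule eq_0)
  qed
  then show ?thesis
    by (simp add: mat_pair.linear_inj_on_iff_eq_0[OF linear_lower_last_column mat.subspace_span])
qed

lemma dim_Lie_less:
  assumes "d \<ge> 3" and "n \<ge> 2"
  shows "mat.dim (Lie n d :: 'a::field_char_0 matrix set) < n"
proof -
  have "mat.dim (Lie n d :: 'a matrix set) = mat.dim (lower_last_column n ` (Lie n d :: 'a matrix set))"
    using inj_on_lower_last_column[OF assms]
    by (rule mat_pair.dim_image_eq_inj_on_span[OF linear_lower_last_column, symmetric])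
  also have "\<dots> \<le> card ((\<lambda>r. mat_unit r n :: 'a matrix) ` {2..n})"
    using lower_last_column_in_span by (intro mat.dim_le_card) auto
  also have "\<dots> \<le> card {2..n}"
    by (rule card_image_le) simp
  finally show ?thesis
    using assms by simp
qed

theorem lemma3p6:
  assumes "alg_closed TYPE('a::field_char_0)"
    and "d \<ge> 3" and "n \<ge> 2"
  shows "vector_space.dim (mscale :: 'a \<Rightarrow> _) (Lie n d :: (nat \<Rightarrow> nat \<Rightarrow> 'a) set)
           < vector_space.dim (mscale :: 'a \<Rightarrow> _) (Cent n d :: (nat \<Rightarrow> nat \<Rightarrow> 'a) set)
       \<and> vector_space.dim (mscale :: 'a \<Rightarrow> _) (Cent n d :: (nat \<Rightarrow> nat \<Rightarrow> 'a) set) = n"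
  using dim_Lie_less[OF assms(2,3), where 'a = 'a] dim_Cent[OF assms(2), of n, where 'a = 'a] by simp

end
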